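(* Let $E$ be an elliptic curve defined over a field $K$ with $\operatorname{char}K\neq 2$, and let $P\in E(K)$. Then at least one of the following holds: (i) $\delta_2^P$ is irreducible over $K$; (ii) $P$ is a $2$-torsion point; (iii) there exists $Q\in E(K)$ with $2Q=P$; (iv) there exist an elliptic curve $E'/K$, an isogeny $\psi:E'\to E$ of degree $2$ defined over $K$, and a point $Q\in E'(K)$ with $\psi(Q)=P$.
   Context: For $E$ with Weierstrass coordinate functions $x,y$ and $m\in\mathbb{Z}$, $\psi_m$ is the $m$-th division polynomial ($\psi_m^2\in K[x]$), $\theta_m=x\psi_m^2-\psi_{m+1}\psi_{m-1}$, so $x([m]R)=\theta_m(x(R))/\psi_m^2(x(R))$; and $\delta_m^P=\theta_m-x(P)\psi_m^2$ if $P\ne O$, $\delta_m^P=\psi_m^2$ if $P=O$. *)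

theory Defs
  imports "HOL-Computational_Algebra.Polynomial"
          "HOL-Computational_Algebra.Factorial_Ring"
          "HOL-Computational_Algebra.Fraction_Field"
begin

record 'a wcurve =
  wa1 :: 'a
  wa2 :: 'a
  wa3 :: 'a
  wa4 :: 'a
  wa6 :: 'a

definition wb2 :: "'a::comm_ring_1 wcurve \<Rightarrow> 'a" where
  "wb2 E = wa1 E ^ 2 + 4 * wa2 E"
definition wb4 :: "'a::comm_ring_1 wcurve \<Rightarrow> 'a" where
  "wb4 E = 2 * wa4 E + wa1 E * wa3 E"
definition wb6 :: "'a::comm_ring_1 wcurve \<Rightarrow> 'a" where
  "wb6 E = wa3 E ^ 2 + 4 * wa6 E"
definition wb8 :: "'a::comm_ring_1 wcurve \<Rightarrow> 'a" where
  "wb8 E = wa1 E ^ 2 * wa6 E + 4 * wa2 E * wa6 E - wa1 E * wa3 E * wa4 E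
           + wa2 E * wa3 E ^ 2 - wa4 E ^ 2"

definition disc :: "'a::comm_ring_1 wcurve \<Rightarrow> 'a" where
  "disc E = - (wb2 E ^ 2 * wb8 E) - 8 * wb4 E ^ 3 - 27 * wb6 E ^ 2
            + 9 * wb2 E * wb4 E * wb6 E"

definition elliptic :: "'a::field wcurve \<Rightarrow> bool" where
  "elliptic E \<longleftrightarrow> disc E \<noteq> 0"

definition weq :: "('a \<Rightarrow> 'b::comm_ring_1) \<Rightarrow> 'a wcurve \<Rightarrow> 'b \<Rightarrow> 'b \<Rightarrow> 'b" where
  "weq c E X Y = Y ^ 2 + c (wa1 E) * X * Y + c (wa3 E) * Y
                 - (X ^ 3 + c (wa2 E) * X ^ 2 + c (wa4 E) * X + c (wa6 E))"

datatype 'a point = Infty | Pt 'a 'a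

fun on_curve :: "'a::field wcurve \<Rightarrow> 'a point \<Rightarrow> bool" where
  "on_curve E Infty = True"
| "on_curve E (Pt x y) = (weq id E x y = 0)"

text \<open>Addition law (Silverman, AEC, III.2.3).\<close>
fun add :: "'a::field wcurve \<Rightarrow> 'a point \<Rightarrow> 'a point \<Rightarrow> 'a point" where
  "add E Infty Q = Q"
| "add E P Infty = P"
| "add E (Pt x1 y1) (Pt x2 y2) =
     (if x1 = x2 \<and> y1 + y2 + wa1 E * x2 + wa3 E = 0 then Infty
      else
        (let l = (if x1 \<noteq> x2 then (y2 - y1) / (x2 - x1)
                  else (3 * x1 ^ 2 + 2 * wa2 E * x1 + wa4 E - wa1 E * y1)
                        / (2 * y1 + wa1 E * x1 + wa3 E));
             n = (if x1 \<noteq> x2 then (y1 * x2 - y2 * x1) / (x2 - x1)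
                  else (- (x1 ^ 3) + wa4 E * x1 + 2 * wa6 E - wa3 E * y1)
                        / (2 * y1 + wa1 E * x1 + wa3 E));
             x3 = l ^ 2 + wa1 E * l - wa2 E - x1 - x2;
             y3 = - (l + wa1 E) * x3 - n - wa3 E
         in Pt x3 y3))"

definition two_torsion :: "'a::field wcurve \<Rightarrow> 'a point \<Rightarrow> bool" where
  "two_torsion E P \<longleftrightarrow> add E P P = Infty"

text \<open>psi_1 = 1; psi_2^2 = 4x^3 + b2 x^2 + 2 b4 x + b6 (in K[x]);
  psi_3 = 3x^4 + b2 x^3 + 3 b4 x^2 + 3 b6 x + b8;
  theta_2 = x psi_2^2 - psi_3 psi_1.\<close>
definition psi2sq :: "'a::field wcurve \<Rightarrow> 'a poly" where
  "psi2sq E = [:wb6 E, 2 * wb4 E, wb2 E, 4:]"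
definition psi3 :: "'a::field wcurve \<Rightarrow> 'a poly" where
  "psi3 E = [:wb8 E, 3 * wb6 E, 3 * wb4 E, wb2 E, 3:]"
definition theta2 :: "'a::field wcurve \<Rightarrow> 'a poly" where
  "theta2 E = [:0, 1:] * psi2sq E - psi3 E * 1"

definition delta2 :: "'a::field wcurve \<Rightarrow> 'a point \<Rightarrow> 'a poly" where
  "delta2 E P = (case P of Infty \<Rightarrow> psi2sq E
                  | Pt xP yP \<Rightarrow> theta2 E - smult xP (psi2sq E))"

text \<open>An isogeny psi : E' -> E defined over K is represented by its coordinate functions,
  which are elements of the function field K(E') = K(x) + K(x) y:
    x o psi = u(x)/v(x),   y o psi = (g1(x)/g2(x)) y + h1(x)/h2(x),
  with each quotient in lowest terms.  The requirement that psi maps E' to E is that the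
  Weierstrass equation of E, evaluated at (x o psi, y o psi), vanishes in K(E') =
  K(x)[y]/(equation of E'), i.e. that the equation of E' (a polynomial in y over K(x))
  divides it.  psi(O) = O holds iff x o psi has a pole at O, i.e. deg v < deg u.
  The degree of psi is [K(E') : psi^* K(E)] = [K(x) : K(u/v)] = max(deg u, deg v) = deg u.\<close>

type_synonym 'a isog = "'a poly \<times> 'a poly \<times> 'a poly \<times> 'a poly \<times> 'a poly \<times> 'a poly"

definition iu :: "'a isog \<Rightarrow> 'a poly" where "iu \<phi> = fst \<phi>"
definition iv :: "'a isog \<Rightarrow> 'a poly" where "iv \<phi> = fst (snd \<phi>)"
definition ig1 :: "'a isog \<Rightarrow> 'a poly" where "ig1 \<phi> = fst (snd (snd \<phi>))"
definition ig2 :: "'a isog \<Rightarrow> 'a poly" where "ig2 \<phi> = fst (snd (snd (snd \<phi>)))"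
definition ih1 :: "'a isog \<Rightarrow> 'a poly" where "ih1 \<phi> = fst (snd (snd (snd (snd \<phi>))))"
definition ih2 :: "'a isog \<Rightarrow> 'a poly" where "ih2 \<phi> = snd (snd (snd (snd (snd \<phi>))))"

definition cK :: "'a::field \<Rightarrow> 'a poly fract poly" where
  "cK a = [: Fract [:a:] 1 :]"

definition is_isogeny :: "'a::field wcurve \<Rightarrow> 'a wcurve \<Rightarrow> 'a isog \<Rightarrow> bool" where
  "is_isogeny E' E \<phi> \<longleftrightarrow>
     iv \<phi> \<noteq> 0 \<and> ig2 \<phi> \<noteq> 0 \<and> ih2 \<phi> \<noteq> 0 \<and>
     coprime (iu \<phi>) (iv \<phi>) \<and> coprime (ig1 \<phi>) (ig2 \<phi>) \<and> coprime (ih1 \<phi>) (ih2 \<phi>) \<and>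
     degree (iv \<phi>) < degree (iu \<phi>) \<and>
     weq cK E' [: Fract [:0, 1:] 1 :] [:0, 1:]
       dvd weq cK E [: Fract (iu \<phi>) (iv \<phi>) :]
                    [: Fract (ih1 \<phi>) (ih2 \<phi>), Fract (ig1 \<phi>) (ig2 \<phi>) :]"

definition isog_degree :: "('a::field) isog \<Rightarrow> nat" where
  "isog_degree \<phi> = max (degree (iu \<phi>)) (degree (iv \<phi>))"

fun isog_apply :: "('a::field) isog \<Rightarrow> 'a point \<Rightarrow> 'a point" where
  "isog_apply \<phi> Infty = Infty"
| "isog_apply \<phi> (Pt x y) =
     (if poly (iv \<phi>) x = 0 then Infty
      else Pt (poly (iu \<phi>) x / poly (iv \<phi>) x)
              (poly (ig1 \<phi>) x / poly (ig2 \<phi>) x * y + poly (ih1 \<phi>) x / poly (ih2 \<phi>) x))"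

end

theory Submission
  imports Defs "HOL-Computational_Algebra.Polynomial_Factorial"
begin

text \<open>
  Since char K \<noteq> 2 we may complete the square: with
  eta = y + (a1 x + a3)/2 the curve reads eta^2 = f(x) for a monic cubic f, and
  disc E \<noteq> 0 makes f separable.  For P = (p, q) with eta(P) \<noteq> 0 (i.e. P not 2-torsion),
  delta2^P(x) = f'(x)^2 - 4 f(x) (b2/4 + 2x + p) is a quartic whose translate by p is the
  depressed quartic x^4 - 2 f'(p) x^2 - 8 eta(P)^2 x + c.  If it is reducible it either
  (a) has a root x0, and then the tangent at the point with x-coordinate x0 (and a suitable
      eta-coordinate) passes through -P, giving Q with 2Q = P; or
  (b) is a product of two quadratics; the resolvent cubic then yields a root e of f with
      p - e = w^2 a nonzero square, and P has an explicit K-rational preimage under the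
      2-isogeny E' -> E dual to the quotient of E by its 2-torsion point with x = e.
\<close>

text \<open>In characteristic \<noteq> 2 no power of two vanishes; as a simp rule this discharges the
  side conditions 4 \<noteq> 0, 8 \<noteq> 0, ... produced by field_simps.\<close>

lemma numeral_Bit0_eq_0_iff:
  assumes "(2::'a::field) \<noteq> 0"
  shows "(numeral (Num.Bit0 n) :: 'a) = 0 \<longleftrightarrow> (numeral n :: 'a) = 0"
proof -
  have "(numeral (Num.Bit0 n) :: 'a) = 2 * numeral n" by (metis numeral_Bit0 mult_2)
  then show ?thesis using assms by (metis mult_eq_0_iff)
qed

section \<open>The normal form eta^2 = f(x)\<close>

definition cb2 :: "'a::field wcurve \<Rightarrow> 'a" where "cb2 E = wa1 E ^ 2 / 4 + wa2 E"
definition cb4 :: "'a::field wcurve \<Rightarrow> 'a" where "cb4 E = wa1 E * wa3 E / 2 + wa4 E"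
definition cb6 :: "'a::field wcurve \<Rightarrow> 'a" where "cb6 E = wa3 E ^ 2 / 4 + wa6 E"

definition cubic :: "'a::field wcurve \<Rightarrow> 'a \<Rightarrow> 'a" where
  "cubic E x = x ^ 3 + cb2 E * x ^ 2 + cb4 E * x + cb6 E"

definition cubic' :: "'a::field wcurve \<Rightarrow> 'a \<Rightarrow> 'a" where
  "cubic' E x = 3 * x ^ 2 + 2 * cb2 E * x + cb4 E"

definition eta :: "'a::field wcurve \<Rightarrow> 'a \<Rightarrow> 'a \<Rightarrow> 'a" where
  "eta E x y = y + (wa1 E * x + wa3 E) / 2"

lemma weq_normal_form:
  fixes E :: "'a::field wcurve"
  assumes two: "(2::'a) \<noteq> 0"
  shows "weq id E x y = eta E x y ^ 2 - cubic E x"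
  unfolding weq_def eta_def cubic_def cb2_def cb4_def cb6_def
  by (simp add: numeral_Bit0_eq_0_iff[OF two] field_simps power2_eq_square power3_eq_cube)

text \<open>An affine point is 2-torsion exactly when it is fixed by negation, i.e. eta = 0.\<close>

lemma two_torsion_iff_eta:
  fixes E :: "'a::field wcurve"
  assumes two: "(2::'a) \<noteq> 0"
  shows "two_torsion E (Pt x y) \<longleftrightarrow> eta E x y = 0"
proof -
  have "y + y + wa1 E * x + wa3 E = 2 * eta E x y"
    unfolding eta_def using two by (simp add: field_simps)
  then show ?thesis using two by (simp add: two_torsion_def Let_def)
qed

lemma cubic_taylor:
  "cubic E (x + h) = cubic E x + cubic' E x * h + (3 * x + cb2 E) * h ^ 2 + h ^ 3"
  unfolding cubic_def cubic'_def by (simp add: algebra_simps power2_eq_square power3_eq_cube)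

lemma disc_at_cubic_root:
  fixes E :: "'a::field wcurve"
  assumes two: "(2::'a) \<noteq> 0" and root: "cubic E e = 0"
  shows "disc E = 16 * cubic' E e ^ 2 * ((3 * e + cb2 E) ^ 2 - 4 * cubic' E e)"
proof -
  have a6: "wa6 E = - (e ^ 3 + cb2 E * e ^ 2 + cb4 E * e) - wa3 E ^ 2 / 4"
    using root unfolding cubic_def cb6_def by (simp add: algebra_simps eq_neg_iff_add_eq_0)
  show ?thesis
    unfolding disc_def wb2_def wb4_def wb6_def wb8_def a6 cubic'_def cb2_def cb4_def
    by (simp add: numeral_Bit0_eq_0_iff[OF two] field_simps power2_eq_square power3_eq_cube)
qed

lemma cubic_separable:
  fixes E :: "'a::field wcurve"
  assumes two: "(2::'a) \<noteq> 0" and ell: "elliptic E" and root: "cubic E e = 0"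
  shows "cubic' E e \<noteq> 0"
  using disc_at_cubic_root[OF two root] ell by (auto simp: elliptic_def)

lemma poly_delta2:
  fixes E :: "'a::field wcurve"
  assumes two: "(2::'a) \<noteq> 0"
  shows "poly (delta2 E (Pt p q)) x = cubic' E x ^ 2 - 4 * cubic E x * (cb2 E + 2 * x + p)"
  unfolding delta2_def theta2_def psi2sq_def psi3_def wb2_def wb4_def wb6_def wb8_def
    cubic_def cubic'_def cb2_def cb4_def cb6_def
  by (simp add: numeral_Bit0_eq_0_iff[OF two] field_simps power2_eq_square power3_eq_cube)

text \<open>Translated by p, delta2^P becomes a depressed monic quartic whose linear coefficient is
  -8 f(p) = -8 eta(P)^2.\<close>

lemma delta2_translate:
  fixes E :: "'a::field wcurve"
  assumes two: "(2::'a) \<noteq> 0"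
  shows "pcompose (delta2 E (Pt p q)) [:p, 1:] =
    [:cubic' E p ^ 2 - 4 * (3 * p + cb2 E) * cubic E p, - 8 * cubic E p, - 2 * cubic' E p, 0, 1:]"
  unfolding delta2_def theta2_def psi2sq_def psi3_def wb2_def wb4_def wb6_def wb8_def
    cubic_def cubic'_def cb2_def cb4_def cb6_def
  by (simp add: numeral_Bit0_eq_0_iff[OF two] pcompose_pCons field_simps power2_eq_square power3_eq_cube)

lemma degree_delta2:
  fixes E :: "'a::field wcurve"
  assumes two: "(2::'a) \<noteq> 0"
  shows "degree (delta2 E (Pt p q)) = 4"
proof -
  have "degree (pcompose (delta2 E (Pt p q)) [:p, 1:]) = 4"
    unfolding delta2_translate[OF two] by simp
  then show ?thesis by (simp add: degree_pcompose)
qed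

lemma power6_eq: "(x::'a::comm_monoid_mult) ^ 6 = x * x * x * x * x * x"
  by (simp add: numeral_eq_Suc algebra_simps)

lemma degree1_has_root:
  fixes a :: "'a::field poly"
  assumes "degree a = 1"
  shows "\<exists>x. poly a x = 0"
proof -
  have a: "a = [:coeff a 0, coeff a 1:]"
    by (rule poly_eqI) (use assms coeff_eq_0[of a] in \<open>auto simp: coeff_pCons split: nat.split\<close>)
  have "coeff a 1 \<noteq> 0" using assms by (metis leading_coeff_0_iff one_neq_zero degree_0)
  then have "poly a (- coeff a 0 / coeff a 1) = 0" by (subst a) simp
  then show ?thesis by blast
qed

lemma reducible_quartic_cases:
  fixes d :: "'a::field poly"
  assumes red: "\<not> irreducible d" and deg: "degree d = 4"
  shows "(\<exists>x. poly d x = 0) \<or> (\<exists>a b. degree a = 2 \<and> degree b = 2 \<and> d = a * b)"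
proof -
  have d0: "d \<noteq> 0" using deg by auto
  then have "\<not> is_unit d" using deg by (simp add: is_unit_iff_degree)
  then obtain a b where ab: "d = a * b" "\<not> is_unit a" "\<not> is_unit b"
    using red d0 unfolding irreducible_def by blast
  have "a \<noteq> 0" "b \<noteq> 0" using ab d0 by auto
  then have "degree a \<noteq> 0" "degree b \<noteq> 0" "degree a + degree b = 4"
    using ab deg is_unit_iff_degree degree_mult_eq by metis+
  then consider "degree a = 1" | "degree b = 1" | "degree a = 2" "degree b = 2" by linarith
  then show ?thesis
    by cases (use ab(1) degree1_has_root[of a] degree1_has_root[of b] in auto)
qed

lemma degree2_poly_eq:
  fixes a :: "'a::zero poly"
  assumes "degree a = 2"
  shows "a = [:coeff a 0, coeff a 1, coeff a 2:]"
  by (rule poly_eqI)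
    (use assms coeff_eq_0[of a] in \<open>auto simp: coeff_pCons numeral_2_eq_2 split: nat.split\<close>)

text \<open>A monic depressed quartic that is a product of two quadratics yields a nonzero root
  sigma of its resolvent cubic in sigma^2 (sigma being the x-coefficient of one monic factor).\<close>

lemma depressed_quartic_quadratic_factors:
  fixes a b :: "'a::field poly"
  assumes eq: "[:k0, k1, k2, 0, 1:] = a * b" and da: "degree a = 2" and db: "degree b = 2"
    and k1: "k1 \<noteq> 0"
  shows "\<exists>\<sigma>. \<sigma> \<noteq> 0 \<and> \<sigma> ^ 6 + 2 * k2 * \<sigma> ^ 4 + (k2 ^ 2 - 4 * k0) * \<sigma> ^ 2 - k1 ^ 2 = 0"
proof -
  define a0 a1 a2 b0 b1 b2 where "a0 = coeff a 0" "a1 = coeff a 1" "a2 = coeff a 2"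
    "b0 = coeff b 0" "b1 = coeff b 1" "b2 = coeff b 2"
  have "[:k0, k1, k2, 0, 1:] = [:a0, a1, a2:] * [:b0, b1, b2:]"
    using eq degree2_poly_eq[OF da] degree2_poly_eq[OF db] unfolding a0_a1_a2_b0_b1_b2_def by metis
  then have c: "k0 = a0 * b0" "k1 = a0 * b1 + a1 * b0" "k2 = a0 * b2 + a1 * b1 + a2 * b0"
     "0 = a1 * b2 + a2 * b1" "1 = a2 * b2"
    by (simp_all add: algebra_simps)
  define \<sigma> \<tau> \<tau>' where "\<sigma> = a1 * b2" "\<tau> = a0 * b2" "\<tau>' = b0 * a2"
  have b1: "b1 = - a1 * b2 * b2"
  proof -
    have "b1 = (a2 * b1) * b2" using c(5) by (simp add: ac_simps)
    also have "a2 * b1 = - (a1 * b2)" using c(4) by (simp add: eq_neg_iff_add_eq_0 add.commute)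
    finally show ?thesis by simp
  qed
  have k2: "k2 = \<tau> + \<tau>' - \<sigma> ^ 2" and k1': "k1 = \<sigma> * (\<tau>' - \<tau>)" and k0: "k0 = \<tau> * \<tau>'"
    unfolding c(1-3) b1 \<sigma>_\<tau>_\<tau>'_def using c(5) by (simp_all add: algebra_simps power2_eq_square)
  have "\<sigma> \<noteq> 0" using k1 k1' by auto
  moreover have "\<sigma> ^ 6 + 2 * k2 * \<sigma> ^ 4 + (k2 ^ 2 - 4 * k0) * \<sigma> ^ 2 - k1 ^ 2 = 0"
    unfolding k2 k1' k0 by (simp add: algebra_simps power2_eq_square power4_eq_xxxx power6_eq)
  ultimately show ?thesis by blast
qed

section \<open>Case (a): halving a point\<close>

lemma double_normal_form:
  fixes E :: "'a::field wcurve"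
  assumes two: "(2::'a) \<noteq> 0" and on: "on_curve E (Pt x y)" and ne: "eta E x y \<noteq> 0"
  defines "l \<equiv> cubic' E x / (2 * eta E x y)"
  defines "x2 \<equiv> l ^ 2 - cb2 E - 2 * x"
  shows "add E (Pt x y) (Pt x y) =
           Pt x2 (- (l * (x2 - x) + eta E x y) - (wa1 E * x2 + wa3 E) / 2)"
proof -
  note pow2 = numeral_Bit0_eq_0_iff[OF two]
  define d where "d = 2 * y + wa1 E * x + wa3 E"
  have d: "d = 2 * eta E x y" unfolding d_def eta_def using two by (simp add: pow2 field_simps)
  then have d0: "d \<noteq> 0" using ne two by simp
  \<comment> \<open>slope and intercept of the tangent line, as in the definition of add\<close>
  define slope where "slope = (3 * x ^ 2 + 2 * wa2 E * x + wa4 E - wa1 E * y) / d"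
  define icpt where "icpt = (- (x ^ 3) + wa4 E * x + 2 * wa6 E - wa3 E * y) / d"
  have slope: "slope = l - wa1 E / 2"
  proof -
    have "3 * x ^ 2 + 2 * wa2 E * x + wa4 E - wa1 E * y = cubic' E x - wa1 E * d / 2"
      unfolding d_def cubic'_def cb2_def cb4_def using two by (simp add: pow2 field_simps power2_eq_square)
    then show ?thesis unfolding slope_def l_def d[symmetric] using d0 by (simp add: field_simps)
  qed
  have icpt: "icpt = y - slope * x"
  proof -
    have a6: "wa6 E = y ^ 2 + wa1 E * x * y + wa3 E * y - x ^ 3 - wa2 E * x ^ 2 - wa4 E * x"
      using on by (simp add: weq_def algebra_simps)
    have "(y - slope * x) * d = - (x ^ 3) + wa4 E * x + 2 * wa6 E - wa3 E * y"
      unfolding slope_def a6 using d0 unfolding d_def by (simp add: field_simps power2_eq_square power3_eq_cube)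
    then show ?thesis unfolding icpt_def using d0 by (simp add: field_simps)
  qed
  have "y + y + wa1 E * x + wa3 E \<noteq> 0" using d0 unfolding d_def by (metis mult_2)
  then have "add E (Pt x y) (Pt x y) =
      Pt (slope ^ 2 + wa1 E * slope - wa2 E - x - x) (- (slope + wa1 E) * (slope ^ 2 + wa1 E * slope - wa2 E - x - x) - icpt - wa3 E)"
    by (simp add: Let_def slope_def icpt_def d_def)
  moreover have "slope ^ 2 + wa1 E * slope - wa2 E - x - x = x2"
    unfolding slope x2_def cb2_def using two by (simp add: pow2 field_simps power2_eq_square)
  moreover have "- (slope + wa1 E) * x2 - icpt - wa3 E = - (l * (x2 - x) + eta E x y) - (wa1 E * x2 + wa3 E) / 2"
    unfolding icpt slope eta_def using two by (simp add: pow2 field_simps)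
  ultimately show ?thesis by simp
qed

text \<open>A root x0 of delta2 is the x-coordinate of a K-rational half of P: for the right sign
  of eta, the tangent at (x0, eta0) passes through -P.\<close>

lemma halving_from_root:
  fixes E :: "'a::field wcurve"
  assumes two: "(2::'a) \<noteq> 0" and ell: "elliptic E"
    and on: "on_curve E (Pt p q)" and ne: "eta E p q \<noteq> 0"
    and root: "poly (delta2 E (Pt p q)) x0 = 0"
  shows "\<exists>Q. on_curve E Q \<and> add E Q Q = Pt p q"
proof -
  note pow2 = numeral_Bit0_eq_0_iff[OF two]
  define \<eta> where "\<eta> = eta E p q"
  have \<eta>2: "\<eta> ^ 2 = cubic E p" using on weq_normal_form[OF two, of E p q] by (simp add: \<eta>_def)
  have tangent: "cubic' E x0 ^ 2 = 4 * cubic E x0 * (cb2 E + 2 * x0 + p)"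
    using root poly_delta2[OF two, of E p q x0] by simp
  define N where "N = cubic' E x0 * (p - x0) + 2 * cubic E x0"
  define y' where "y' = - N / (2 * \<eta>)"
  define y0 where "y0 = y' - (wa1 E * x0 + wa3 E) / 2"
  have N2: "N ^ 2 = 4 * cubic E x0 * \<eta> ^ 2"
  proof -
    have "N ^ 2 = cubic' E x0 ^ 2 * (p - x0) ^ 2 + 4 * cubic E x0 * cubic' E x0 * (p - x0)
                  + 4 * cubic E x0 ^ 2"
      unfolding N_def by (simp add: algebra_simps power2_eq_square)
    also have "\<dots> = 4 * cubic E x0 * ((cb2 E + 2 * x0 + p) * (p - x0) ^ 2
                   + cubic' E x0 * (p - x0) + cubic E x0)"
      unfolding tangent by (simp add: algebra_simps power2_eq_square)
    also have "(cb2 E + 2 * x0 + p) * (p - x0) ^ 2 + cubic' E x0 * (p - x0) + cubic E x0 = cubic E p"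
      using cubic_taylor[of E x0 "p - x0"] by (simp add: algebra_simps power2_eq_square power3_eq_cube)
    finally show ?thesis by (simp add: \<eta>2)
  qed
  have y'2: "y' ^ 2 = cubic E x0"
    using N2 ne two unfolding y'_def \<eta>_def by (simp add: pow2 power_divide power_mult_distrib)
  have "cubic E x0 \<noteq> 0"
    using cubic_separable[OF two ell] tangent by force
  then have y'0: "y' \<noteq> 0" using y'2 by auto
  have eta0: "eta E x0 y0 = y'" unfolding eta_def y0_def by simp
  have on0: "on_curve E (Pt x0 y0)" using weq_normal_form[OF two, of E x0 y0] eta0 y'2 by simp
  define l where "l = cubic' E x0 / (2 * y')"
  have x: "l ^ 2 - cb2 E - 2 * x0 = p"
    unfolding l_def using y'0 two \<open>cubic E x0 \<noteq> 0\<close>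
    by (simp add: pow2 power_divide power_mult_distrib y'2 tangent)
  have y: "- (l * (p - x0) + y') - (wa1 E * p + wa3 E) / 2 = q"
  proof -
    have "l * (p - x0) + y' = N / (2 * y')"
      unfolding l_def N_def using y'0 two by (simp add: field_simps power2_eq_square flip: y'2)
    also have "N = - 2 * \<eta> * y'" unfolding y'_def using ne two by (simp add: \<eta>_def)
    also have "\<dots> / (2 * y') = - \<eta>" using y'0 two by simp
    finally show ?thesis unfolding \<eta>_def eta_def by simp
  qed
  have "add E (Pt x0 y0) (Pt x0 y0) = Pt p q"
    using double_normal_form[OF two on0] y'0 unfolding eta0 l_def[symmetric] x y by simp
  then show ?thesis using on0 by blast
qed

section \<open>Case (b): a rational root of f below P\<close>

text \<open>If delta2 splits into two quadratics, the resolvent cubic provides a root e of the cubic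
  with p - e a nonzero square: P then lies in the image of the 2-isogeny attached to (e, 0).\<close>

lemma root_from_quadratic_factors:
  fixes E :: "'a::field wcurve"
  assumes two: "(2::'a) \<noteq> 0" and on: "on_curve E (Pt p q)" and ne: "eta E p q \<noteq> 0"
    and fac: "delta2 E (Pt p q) = a * b" "degree a = 2" "degree b = 2"
  shows "\<exists>e w. cubic E e = 0 \<and> w \<noteq> 0 \<and> p = e + w ^ 2"
proof -
  define \<eta> where "\<eta> = eta E p q"
  have \<eta>2: "\<eta> ^ 2 = cubic E p" using on weq_normal_form[OF two, of E p q] by (simp add: \<eta>_def)
  define c1 c2 where "c1 = cubic' E p" "c2 = 3 * p + cb2 E"
  have "[:c1 ^ 2 - 4 * c2 * \<eta> ^ 2, - 8 * \<eta> ^ 2, - 2 * c1, 0, 1:]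
        = pcompose a [:p, 1:] * pcompose b [:p, 1:]"
    using delta2_translate[OF two, of E p q] fac(1) \<eta>2 unfolding c1_c2_def by (simp add: pcompose_mult)
  moreover have "degree (pcompose a [:p, 1:]) = 2" "degree (pcompose b [:p, 1:]) = 2"
    using fac by (simp_all add: degree_pcompose)
  moreover have "- 8 * \<eta> ^ 2 \<noteq> 0" using ne two by (simp add: \<eta>_def numeral_Bit0_eq_0_iff[OF two])
  ultimately obtain \<sigma> where \<sigma>: "\<sigma> \<noteq> 0"
    "\<sigma> ^ 6 + 2 * (- 2 * c1) * \<sigma> ^ 4 + ((- 2 * c1) ^ 2 - 4 * (c1 ^ 2 - 4 * c2 * \<eta> ^ 2)) * \<sigma> ^ 2
       - (- 8 * \<eta> ^ 2) ^ 2 = 0"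
    using depressed_quartic_quadratic_factors by blast
  define w where "w = - 2 * \<eta> / \<sigma>"
  define e where "e = p - w ^ 2"
  have w0: "w \<noteq> 0" unfolding w_def using \<sigma>(1) ne two by (simp add: \<eta>_def)
  have w\<sigma>: "w ^ 2 * \<sigma> ^ 2 = 4 * \<eta> ^ 2" unfolding w_def using \<sigma>(1)
    by (simp add: power_divide power_mult_distrib)
  have taylor: "cubic E e = \<eta> ^ 2 - c1 * w ^ 2 + c2 * (w ^ 2) ^ 2 - (w ^ 2) ^ 3"
    using cubic_taylor[of E p "- (w ^ 2)"] \<eta>2 unfolding e_def c1_c2_def
    by (simp add: power2_eq_square power3_eq_cube)
  have "cubic E e * \<sigma> ^ 6 = \<eta> ^ 2 * \<sigma> ^ 6 - c1 * (w ^ 2 * \<sigma> ^ 2) * \<sigma> ^ 4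
      + c2 * (w ^ 2 * \<sigma> ^ 2) ^ 2 * \<sigma> ^ 2 - (w ^ 2 * \<sigma> ^ 2) ^ 3"
    unfolding taylor by (simp add: algebra_simps power2_eq_square power3_eq_cube power4_eq_xxxx power6_eq)
  also have "\<dots> = \<eta> ^ 2 * (\<sigma> ^ 6 + 2 * (- 2 * c1) * \<sigma> ^ 4
      + ((- 2 * c1) ^ 2 - 4 * (c1 ^ 2 - 4 * c2 * \<eta> ^ 2)) * \<sigma> ^ 2 - (- 8 * \<eta> ^ 2) ^ 2)"
    unfolding w\<sigma> by (simp add: algebra_simps power2_eq_square power3_eq_cube power4_eq_xxxx power6_eq)
  also have "\<dots> = 0" using \<sigma>(2) by simp
  finally have "cubic E e = 0" using \<sigma>(1) by simp
  moreover have "p = e + w ^ 2" unfolding e_def by simp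
  ultimately show ?thesis using w0 by blast
qed
section \<open>The 2-isogeny attached to a root of f\<close>

lemma bezout_coprime:
  fixes a b :: "'a::algebraic_semidom"
  assumes "x * a + y * b = 1"
  shows "coprime a b"
proof (rule coprimeI)
  fix c assume "c dvd a" "c dvd b"
  then have "c dvd x * a + y * b" by simp
  then show "is_unit c" using assms by simp
qed

lemma coprime_linear_monomial:
  fixes p :: "'a::field poly"
  assumes "poly p 0 \<noteq> 0" and "c \<noteq> 0"
  shows "coprime p [:0, c:]"
proof -
  obtain a r where p: "p = pCons a r" by (rule pCons_cases)
  then have "a \<noteq> 0" using assms(1) by simp
  then have "[:1 / a:] * p + smult (- 1 / (a * c)) r * [:0, c:] = 1"
    unfolding p using assms(2) by (simp add: one_pCons)
  then show ?thesis by (rule bezout_coprime)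
qed

text \<open>The 2-isogeny in x-coordinates: for E0: Y^2 = Y'(Y'^2 + A Y' + B) and
  E1: W^2 = Z(Z^2 - 2 A Z + D), D = A^2 - 4B, the map
  Z |-> (Z^2 - 2AZ + D)/(4Z), W |-> W (D - Z^2)/(8Z^2) sends E1 to E0.  Here the
  identity is stated for E0 in general Weierstrass form with a 2-torsion point at x = e,
  over an arbitrary field.\<close>

lemma two_isogeny_identity:
  fixes a1 a2 a3 a4 a6 e A B D Z X G H :: "'b::field"
  assumes two: "(2::'b) \<noteq> 0" and Z: "Z \<noteq> 0"
    and root: "e ^ 3 + (a1 ^ 2 / 4 + a2) * e ^ 2 + (a1 * a3 / 2 + a4) * e + (a3 ^ 2 / 4 + a6) = 0"
    and A: "A = 3 * e + (a1 ^ 2 / 4 + a2)"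
    and B: "B = 3 * e ^ 2 + 2 * (a1 ^ 2 / 4 + a2) * e + (a1 * a3 / 2 + a4)"
    and D: "D = A ^ 2 - 4 * B"
    and X: "X = (Z ^ 2 + (4 * e - 2 * A) * Z + D) / (4 * Z)"
    and G: "G = (D - Z ^ 2) / (8 * Z ^ 2)"
    and H: "H = - (a1 * X + a3) / 2"
  shows "H ^ 2 + a1 * X * H + a3 * H - (X ^ 3 + a2 * X ^ 2 + a4 * X + a6)
           = - (G ^ 2 * (Z ^ 3 - 2 * A * Z ^ 2 + D * Z))"
    and "2 * H + a1 * X + a3 = 0"
proof -
  note pow2 = numeral_Bit0_eq_0_iff[OF two]
  define U where "U = Z ^ 2 - 2 * A * Z + D"
  define Y where "Y = U / (4 * Z)"
  have XY: "X = e + Y" unfolding X Y_def U_def using Z by (simp add: pow2 field_simps)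
  have a6: "a6 = - (e ^ 3 + (a1 ^ 2 / 4 + a2) * e ^ 2 + (a1 * a3 / 2 + a4) * e + a3 ^ 2 / 4)"
    using root by (simp add: algebra_simps eq_neg_iff_add_eq_0)
  have "H ^ 2 + a1 * X * H + a3 * H - (X ^ 3 + a2 * X ^ 2 + a4 * X + a6) = - (Y ^ 3 + A * Y ^ 2 + B * Y)"
    unfolding H XY A B a6 by (simp add: pow2 field_simps power2_eq_square power3_eq_cube)
  also have "Y ^ 3 + A * Y ^ 2 + B * Y = U * (U ^ 2 + 4 * A * Z * U + 16 * B * Z ^ 2) / (64 * Z ^ 3)"
    unfolding Y_def using Z by (simp add: pow2 field_simps power2_eq_square power3_eq_cube)
  also have "U ^ 2 + 4 * A * Z * U + 16 * B * Z ^ 2 = (D - Z ^ 2) ^ 2"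
    unfolding U_def D by (simp add: algebra_simps power2_eq_square)
  also have "U * (D - Z ^ 2) ^ 2 / (64 * Z ^ 3) = G ^ 2 * (Z ^ 3 - 2 * A * Z ^ 2 + D * Z)"
    unfolding G U_def using Z by (simp add: pow2 field_simps power2_eq_square power3_eq_cube)
  finally show "H ^ 2 + a1 * X * H + a3 * H - (X ^ 3 + a2 * X ^ 2 + a4 * X + a6)
           = - (G ^ 2 * (Z ^ 3 - 2 * A * Z ^ 2 + D * Z))" by simp
  show "2 * H + a1 * X + a3 = 0" unfolding H using two by (simp add: field_simps)
qed

definition Cf :: "'a::field \<Rightarrow> 'a poly fract" where "Cf c = to_fract [:c:]"
definition Zf :: "'a::field poly fract" where "Zf = to_fract [:0, 1:]"

lemma Cf_0 [simp]: "Cf 0 = 0" and Cf_1 [simp]: "Cf 1 = 1"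
  by (simp_all add: Cf_def one_pCons[symmetric])

lemma Cf_add [simp]: "Cf (x + y) = Cf x + Cf y"
  and Cf_minus [simp]: "Cf (- x) = - Cf x"
  and Cf_diff [simp]: "Cf (x - y) = Cf x - Cf y"
  and Cf_mult [simp]: "Cf (x * y) = Cf x * Cf y"
  unfolding Cf_def by (simp_all flip: to_fract_add to_fract_uminus to_fract_diff to_fract_mult)

lemma Cf_eq_0_iff [simp]: "Cf x = 0 \<longleftrightarrow> x = 0"
  by (simp add: Cf_def)

lemma Cf_power [simp]: "Cf (x ^ n) = Cf x ^ n"
  by (induction n) simp_all

lemma Cf_numeral [simp]: "Cf (numeral n) = numeral n"
proof -
  have "Cf (of_nat m) = of_nat m" for m by (induction m) simp_all
  from this[of "numeral n"] show ?thesis by simp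
qed

lemma Cf_divide [simp]: "Cf (x / y) = Cf x / Cf y"
proof (cases "y = 0")
  case False
  then have "Cf (x / y) * Cf y = Cf x" by (simp flip: Cf_mult)
  then show ?thesis using False by (simp add: field_simps)
qed simp

lemma to_fract_pCons: "to_fract (pCons c p) = Cf c + Zf * to_fract p"
proof -
  have "pCons c p = [:c:] + [:0, 1:] * p" by simp
  then show ?thesis unfolding Cf_def Zf_def by (metis to_fract_add to_fract_mult)
qed

lemma to_fract_smult: "to_fract (smult c p) = Cf c * to_fract p"
  unfolding Cf_def by (simp flip: to_fract_mult)

lemma cK_eq_Cf: "cK = (\<lambda>x. [:Cf x:])"
  by (simp add: cK_def Cf_def to_fract_def fun_eq_iff)

lemma Zf_nonzero: "Zf \<noteq> 0"
  by (simp add: Zf_def)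

lemma to_fract_linear: "to_fract [:a, b:] = Cf a + Cf b * Zf"
  by (simp add: to_fract_pCons mult.commute)

lemma fract_two_nonzero:
  assumes "(2::'a::field) \<noteq> 0"
  shows "(2 :: 'a poly fract) \<noteq> 0"
  using Cf_eq_0_iff[of "2::'a"] assms by simp

lemma weq_const_poly:
  fixes C :: "'a \<Rightarrow> 'b::comm_ring_1"
  shows "weq (\<lambda>x. [:C x:]) E [:X:] [:H, G:] =
    [: H ^ 2 + C (wa1 E) * X * H + C (wa3 E) * H - (X ^ 3 + C (wa2 E) * X ^ 2 + C (wa4 E) * X + C (wa6 E)),
       G * (2 * H + C (wa1 E) * X + C (wa3 E)), G ^ 2 :]"
  unfolding weq_def by (simp add: power2_eq_square power3_eq_cube algebra_simps)

text \<open>For a root e of f write f(e + t) = t (t^2 + A t + B) with A = iso_A, B = f'(e), and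
  D = A^2 - 4B.  The isogenous curve is E': Y^2 = X (X^2 - 2A X + D), and the isogeny is
  x = e + (X^2 - 2AX + D)/(4X), eta = Y (D - X^2)/(8 X^2).\<close>

definition iso_A :: "'a::field wcurve \<Rightarrow> 'a \<Rightarrow> 'a" where
  "iso_A E e = 3 * e + cb2 E"

definition iso_D :: "'a::field wcurve \<Rightarrow> 'a \<Rightarrow> 'a" where
  "iso_D E e = iso_A E e ^ 2 - 4 * cubic' E e"

definition iso_curve :: "'a::field wcurve \<Rightarrow> 'a \<Rightarrow> 'a wcurve" where
  "iso_curve E e = \<lparr>wa1 = 0, wa2 = - 2 * iso_A E e, wa3 = 0, wa4 = iso_D E e, wa6 = 0\<rparr>"

definition iso_u :: "'a::field wcurve \<Rightarrow> 'a \<Rightarrow> 'a poly" where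
  "iso_u E e = [:iso_D E e, 4 * e - 2 * iso_A E e, 1:]"

definition iso_h :: "'a::field wcurve \<Rightarrow> 'a \<Rightarrow> 'a poly \<times> 'a poly" where
  "iso_h E e = (if wa1 E = 0 then ([:- wa3 E / 2:], 1)
                else (smult (- wa1 E / 2) (iso_u E e) + [:0, - 2 * wa3 E:], [:0, 4:]))"

definition iso_map :: "'a::field wcurve \<Rightarrow> 'a \<Rightarrow> 'a isog" where
  "iso_map E e = (iso_u E e, [:0, 4:], [:iso_D E e, 0, - 1:], [:0, 0, 8:], iso_h E e)"

lemma iso_map_components [simp]:
  "iu (iso_map E e) = iso_u E e" "iv (iso_map E e) = [:0, 4:]"
  "ig1 (iso_map E e) = [:iso_D E e, 0, - 1:]" "ig2 (iso_map E e) = [:0, 0, 8:]"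
  "ih1 (iso_map E e) = fst (iso_h E e)" "ih2 (iso_map E e) = snd (iso_h E e)"
  by (simp_all add: iso_map_def iu_def iv_def ig1_def ig2_def ih1_def ih2_def)

lemma disc_iso_root:
  fixes E :: "'a::field wcurve"
  assumes two: "(2::'a) \<noteq> 0" and root: "cubic E e = 0"
  shows "disc E = 16 * cubic' E e ^ 2 * iso_D E e"
    and "disc (iso_curve E e) = 256 * cubic' E e * iso_D E e ^ 2"
proof -
  show "disc E = 16 * cubic' E e ^ 2 * iso_D E e"
    using disc_at_cubic_root[OF two root] by (simp add: iso_D_def iso_A_def)
  have "disc (iso_curve E e) = 64 * iso_D E e ^ 2 * (iso_A E e ^ 2 - iso_D E e)"
    unfolding iso_curve_def disc_def wb2_def wb4_def wb6_def wb8_def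
    by (simp add: algebra_simps power2_eq_square power3_eq_cube)
  then show "disc (iso_curve E e) = 256 * cubic' E e * iso_D E e ^ 2"
    by (simp add: iso_D_def)
qed

lemma elliptic_iso_curve:
  fixes E :: "'a::field wcurve"
  assumes two: "(2::'a) \<noteq> 0" and ell: "elliptic E" and root: "cubic E e = 0"
  shows "elliptic (iso_curve E e)" and "iso_D E e \<noteq> 0"
proof -
  show D0: "iso_D E e \<noteq> 0" using ell disc_iso_root(1)[OF two root] by (auto simp: elliptic_def)
  then show "elliptic (iso_curve E e)"
    using disc_iso_root(2)[OF two root] cubic_separable[OF two ell root]
    by (simp add: elliptic_def numeral_Bit0_eq_0_iff[OF two])
qed

lemma isog_degree_iso_map:
  assumes "(2::'a::field) \<noteq> 0"
  shows "isog_degree (iso_map (E :: 'a wcurve) e) = 2"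
  using assms by (simp add: isog_degree_def iso_u_def numeral_Bit0_eq_0_iff[OF assms])

text \<open>iso_h represents, in lowest terms, the correction -(a1 x + a3)/2 in y o psi, with
  x = u/v the x-coordinate of the isogeny.\<close>

lemma iso_h_reduced:
  fixes E :: "'a::field wcurve"
  assumes two: "(2::'a) \<noteq> 0" and D0: "iso_D E e \<noteq> 0"
  shows "snd (iso_h E e) \<noteq> 0 \<and> coprime (fst (iso_h E e)) (snd (iso_h E e))"
proof (cases "wa1 E = 0")
  case False
  then have "poly (smult (- wa1 E / 2) (iso_u E e) + [:0, - 2 * wa3 E:]) 0 \<noteq> 0"
    using D0 two by (simp add: iso_u_def)
  then show ?thesis using False two
    by (simp add: iso_h_def coprime_linear_monomial numeral_Bit0_eq_0_iff[OF two])
qed (simp add: iso_h_def)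

lemma iso_h_fract:
  fixes E :: "'a::field wcurve"
  assumes two: "(2::'a) \<noteq> 0"
  shows "Fract (fst (iso_h E e)) (snd (iso_h E e))
           = - (Cf (wa1 E) * Fract (iso_u E e) [:0, 4:] + Cf (wa3 E)) / 2"
proof (cases "wa1 E = 0")
  case True
  have "Fract [:- wa3 E / 2:] 1 = Cf (- wa3 E / 2)" by (simp add: Cf_def to_fract_def)
  then show ?thesis using True fract_two_nonzero[OF two] by (simp add: iso_h_def)
next
  case False
  have affine: "(Cf (- a / 2) * T + Cf (- 2 * c) * Z) / (Cf 4 * Z)
               = - (Cf a * (T / (Cf 4 * Z)) + Cf c) / 2"
    if "Z \<noteq> 0" for a c :: 'a and T Z :: "'a poly fract"
    using that by (simp add: numeral_Bit0_eq_0_iff[OF fract_two_nonzero[OF two]] field_simps)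
  have num: "to_fract (smult (- wa1 E / 2) (iso_u E e) + [:0, - 2 * wa3 E:])
      = Cf (- wa1 E / 2) * to_fract (iso_u E e) + Cf (- 2 * wa3 E) * Zf"
    by (simp only: to_fract_add to_fract_smult to_fract_linear Cf_0 add_0_left)
  have den: "to_fract [:0, 4:] = Cf 4 * Zf"
    by (simp only: to_fract_linear Cf_0 add_0_left)
  show ?thesis
    using False unfolding iso_h_def Fract_conv_to_fract
    by (simp only: if_False fst_conv snd_conv num den affine[OF Zf_nonzero])
qed

lemma iso_h_poly:
  fixes E :: "'a::field wcurve"
  assumes two: "(2::'a) \<noteq> 0" and t: "t \<noteq> 0"
  shows "poly (fst (iso_h E e)) t / poly (snd (iso_h E e)) t
           = - (wa1 E * (poly (iso_u E e) t / (4 * t)) + wa3 E) / 2"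
  using two t by (simp add: iso_h_def numeral_Bit0_eq_0_iff[OF two] field_simps)

text \<open>The coordinate functions of iso_map satisfy the Weierstrass equation of E in the function
  field of iso_curve: the equation of E pulled back is G^2 times that of iso_curve.\<close>

lemma weq_iso_map_dvd:
  fixes E :: "'a::field wcurve"
  assumes two: "(2::'a) \<noteq> 0" and root: "cubic E e = 0" and D0: "iso_D E e \<noteq> 0"
  defines "\<psi> \<equiv> iso_map E e"
  shows "weq cK (iso_curve E e) [: Fract [:0, 1:] 1 :] [:0, 1:]
           dvd weq cK E [: Fract (iu \<psi>) (iv \<psi>) :]
                 [: Fract (ih1 \<psi>) (ih2 \<psi>), Fract (ig1 \<psi>) (ig2 \<psi>) :]"
proof -
  have two': "(2 :: 'a poly fract) \<noteq> 0" by (rule fract_two_nonzero[OF two])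
  define A D where "A = iso_A E e" and "D = iso_D E e"
  define X where "X = Fract (iso_u E e) [:0, 4:]"
  define G where "G = Fract [:D, 0, - 1:] [:0, 0, 8:]"
  define H where "H = Fract (fst (iso_h E e)) (snd (iso_h E e))"
  have X: "X = (Zf ^ 2 + (4 * Cf e - 2 * Cf A) * Zf + Cf D) / (4 * Zf)"
    unfolding X_def Fract_conv_to_fract iso_u_def A_def D_def
    by (simp add: to_fract_pCons algebra_simps power2_eq_square)
  have G: "G = (Cf D - Zf ^ 2) / (8 * Zf ^ 2)"
    unfolding G_def Fract_conv_to_fract by (simp add: to_fract_pCons algebra_simps power2_eq_square)
  have H: "H = - (Cf (wa1 E) * X + Cf (wa3 E)) / 2"
    unfolding H_def X_def by (rule iso_h_fract[OF two])
  have root': "Cf e ^ 3 + (Cf (wa1 E) ^ 2 / 4 + Cf (wa2 E)) * Cf e ^ 2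
      + (Cf (wa1 E) * Cf (wa3 E) / 2 + Cf (wa4 E)) * Cf e + (Cf (wa3 E) ^ 2 / 4 + Cf (wa6 E)) = 0"
    using arg_cong[OF root, of Cf] by (simp add: cubic_def cb2_def cb4_def cb6_def)
  have A: "Cf A = 3 * Cf e + (Cf (wa1 E) ^ 2 / 4 + Cf (wa2 E))"
    by (simp add: A_def iso_A_def cb2_def)
  have B: "Cf (cubic' E e) = 3 * Cf e ^ 2 + 2 * (Cf (wa1 E) ^ 2 / 4 + Cf (wa2 E)) * Cf e
      + (Cf (wa1 E) * Cf (wa3 E) / 2 + Cf (wa4 E))"
    by (simp add: cubic'_def cb2_def cb4_def)
  have D: "Cf D = Cf A ^ 2 - 4 * Cf (cubic' E e)"
    by (simp add: D_def iso_D_def A_def)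
  note identity = two_isogeny_identity[OF two' Zf_nonzero root' A B D X G H]
  have "weq cK E [:X:] [:H, G:] = [:G ^ 2:] * weq cK (iso_curve E e) [:Zf:] [:0, 1:]"
    unfolding cK_eq_Cf weq_const_poly identity
    by (simp add: iso_curve_def A_def D_def algebra_simps)
  moreover have "Fract [:0, 1:] 1 = (Zf :: 'a poly fract)" by (simp add: Zf_def to_fract_def)
  ultimately show ?thesis
    unfolding \<psi>_def iso_map_components X_def[symmetric] H_def[symmetric] G_def[symmetric] D_def[symmetric]
    by (metis dvd_triv_right)
qed

lemma is_isogeny_iso_map:
  fixes E :: "'a::field wcurve"
  assumes two: "(2::'a) \<noteq> 0" and ell: "elliptic E" and root: "cubic E e = 0"
  shows "is_isogeny (iso_curve E e) E (iso_map E e)"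
proof -
  note pow2 = numeral_Bit0_eq_0_iff[OF two]
  have D0: "iso_D E e \<noteq> 0" by (rule elliptic_iso_curve(2)[OF two ell root])
  have "coprime (iso_u E e) [:0, 4:]"
    using D0 by (simp add: coprime_linear_monomial iso_u_def pow2)
  moreover have "[:1 / iso_D E e:] * [:iso_D E e, 0, - 1:] + [:1 / (8 * iso_D E e):] * [:0, 0, 8:] = 1"
    using D0 by (simp add: pow2 field_simps one_pCons)
  then have "coprime [:iso_D E e, 0, - 1:] [:0, 0, 8:]" by (rule bezout_coprime)
  moreover have "degree [:0, 4::'a:] < degree (iso_u E e)" by (simp add: iso_u_def pow2)
  ultimately show ?thesis
    unfolding is_isogeny_def using iso_h_reduced[OF two D0] weq_iso_map_dvd[OF two root D0]
    by (simp add: pow2)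
qed

text \<open>The preimage of a point (e + w^2, eta) with eta^2 = cubic(e + w^2), w \<noteq> 0: its
  X-coordinate is a root of X^2 - 2(A + 2w^2) X + D, namely A + 2w^2 + 2 eta/w.\<close>

lemma iso_curve_preimage_point:
  fixes E :: "'a::field wcurve"
  assumes two: "(2::'a) \<noteq> 0" and root: "cubic E e = 0" and D0: "iso_D E e \<noteq> 0"
    and w0: "w \<noteq> 0" and \<eta>2: "\<eta> ^ 2 = cubic E (e + w ^ 2)"
  defines "xq \<equiv> iso_A E e + 2 * w ^ 2 + 2 * \<eta> / w"
  defines "yq \<equiv> - 2 * w * xq"
  shows "xq \<noteq> 0" and "on_curve (iso_curve E e) (Pt xq yq)"
    and "poly (iso_u E e) xq / (4 * xq) = e + w ^ 2"
    and "poly [:iso_D E e, 0, - 1:] xq / poly [:0, 0, 8:] xq * yq = \<eta>"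
proof -
  define A B D where "A = iso_A E e" and "B = cubic' E e" and "D = iso_D E e"
  define r where "r = 2 * \<eta> / w"
  have "\<eta> ^ 2 = B * w ^ 2 + A * (w ^ 2) ^ 2 + (w ^ 2) ^ 3"
    using cubic_taylor[of E e "w ^ 2"] root \<eta>2 by (simp add: A_def B_def iso_A_def)
  then have "\<eta> ^ 2 = w ^ 2 * (w ^ 4 + A * w ^ 2 + B)"
    by (simp add: algebra_simps power2_eq_square power3_eq_cube power4_eq_xxxx)
  then have r2: "r ^ 2 = 4 * (w ^ 4 + A * w ^ 2 + B)"
    unfolding r_def using w0 by (simp add: power_divide power_mult_distrib)
  have D: "D = (A + 2 * w ^ 2) ^ 2 - r ^ 2"
    unfolding D_def iso_D_def r2 A_def B_def by (simp add: algebra_simps power2_eq_square power4_eq_xxxx)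
  have quadratic: "xq ^ 2 - (2 * A + 4 * w ^ 2) * xq + D = 0"
    unfolding D xq_def A_def r_def[symmetric] by (simp add: algebra_simps power2_eq_square)
  show xq0: "xq \<noteq> 0" using quadratic D0 D_def by auto
  have "weq id (iso_curve E e) xq yq = - xq * (xq ^ 2 - (2 * A + 4 * w ^ 2) * xq + D)"
    unfolding weq_def iso_curve_def yq_def A_def D_def
    by (simp add: algebra_simps power2_eq_square power3_eq_cube)
  then show "on_curve (iso_curve E e) (Pt xq yq)" using quadratic by simp
  have "poly (iso_u E e) xq = xq ^ 2 - (2 * A + 4 * w ^ 2) * xq + D + 4 * (e + w ^ 2) * xq"
    unfolding iso_u_def A_def D_def by (simp add: algebra_simps power2_eq_square)
  then show "poly (iso_u E e) xq / (4 * xq) = e + w ^ 2"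
    using quadratic xq0 two by (simp add: numeral_Bit0_eq_0_iff[OF two])
  have "poly [:iso_D E e, 0, - 1:] xq / poly [:0, 0, 8:] xq = (D - xq ^ 2) / (8 * xq ^ 2)"
    by (simp add: D_def algebra_simps power2_eq_square)
  also have "D - xq ^ 2 = - 2 * r * xq"
    unfolding D xq_def A_def r_def[symmetric] by (simp add: algebra_simps power2_eq_square)
  finally have g: "poly [:iso_D E e, 0, - 1:] xq / poly [:0, 0, 8:] xq = - 2 * r * xq / (8 * xq ^ 2)" .
  show "poly [:iso_D E e, 0, - 1:] xq / poly [:0, 0, 8:] xq * yq = \<eta>"
    unfolding g yq_def r_def using xq0 w0 two
    by (simp add: numeral_Bit0_eq_0_iff[OF two] field_simps power2_eq_square)
qed

lemma iso_map_preimage: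
  fixes E :: "'a::field wcurve"
  assumes two: "(2::'a) \<noteq> 0" and ell: "elliptic E" and root: "cubic E e = 0"
    and on: "on_curve E (Pt p q)" and w0: "w \<noteq> 0" and pe: "p = e + w ^ 2"
  shows "\<exists>Q. on_curve (iso_curve E e) Q \<and> isog_apply (iso_map E e) Q = Pt p q"
proof -
  have D0: "iso_D E e \<noteq> 0" by (rule elliptic_iso_curve(2)[OF two ell root])
  have "eta E p q ^ 2 = cubic E (e + w ^ 2)"
    using on weq_normal_form[OF two, of E p q] pe by simp
  from iso_curve_preimage_point[OF two root D0 w0 this]
  obtain xq yq where xq0: "xq \<noteq> 0" and on_Q: "on_curve (iso_curve E e) (Pt xq yq)"
    and x: "poly (iso_u E e) xq / (4 * xq) = p"
    and y: "poly [:iso_D E e, 0, - 1:] xq / poly [:0, 0, 8:] xq * yq = eta E p q"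
    unfolding pe by blast
  have h: "poly (fst (iso_h E e)) xq / poly (snd (iso_h E e)) xq = - (wa1 E * p + wa3 E) / 2"
    using iso_h_poly[OF two xq0, of E e] unfolding x .
  have "isog_apply (iso_map E e) (Pt xq yq) =
      Pt (poly (iso_u E e) xq / (4 * xq))
         (poly [:iso_D E e, 0, - 1:] xq / poly [:0, 0, 8:] xq * yq
          + poly (fst (iso_h E e)) xq / poly (snd (iso_h E e)) xq)"
    using xq0 two by (simp add: numeral_Bit0_eq_0_iff[OF two])
  also have "\<dots> = Pt p q"
    unfolding x y h eta_def using two by (simp add: numeral_Bit0_eq_0_iff[OF two] field_simps)
  finally show ?thesis using on_Q by blast
qed

theorem lemma4p1:
  fixes E :: "'a::field wcurve" and P :: "'a point"
  assumes char: "(2::'a) \<noteq> 0"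
    and ell: "elliptic E"
    and P: "on_curve E P"
  shows "irreducible (delta2 E P)
         \<or> two_torsion E P
         \<or> (\<exists>Q. on_curve E Q \<and> add E Q Q = P)
         \<or> (\<exists>(E' :: 'a wcurve) (\<psi> :: 'a isog) Q.
               elliptic E' \<and> is_isogeny E' E \<psi> \<and> isog_degree \<psi> = 2
               \<and> on_curve E' Q \<and> isog_apply \<psi> Q = P)"
proof (cases P)
  case Infty
  then show ?thesis by (simp add: two_torsion_def)
next
  case (Pt p q)
  have on: "on_curve E (Pt p q)" using P Pt by simp
  consider "irreducible (delta2 E P) \<or> two_torsion E P"
    | (reducible) "\<not> irreducible (delta2 E (Pt p q))" and "eta E p q \<noteq> 0"
    using Pt two_torsion_iff_eta[OF char] by blast
  then show ?thesis
  proof cases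
    case reducible
    note ne = reducible(2)
    from reducible_quartic_cases[OF reducible(1) degree_delta2[OF char]] show ?thesis
    proof
      assume "\<exists>x. poly (delta2 E (Pt p q)) x = 0"
      then show ?thesis using halving_from_root[OF char ell on ne] Pt by blast
    next
      assume "\<exists>a b. degree a = 2 \<and> degree b = 2 \<and> delta2 E (Pt p q) = a * b"
      then obtain e w where e: "cubic E e = 0" "w \<noteq> 0" "p = e + w ^ 2"
        using root_from_quadratic_factors[OF char on ne] by blast
      then obtain Q where "on_curve (iso_curve E e) Q" "isog_apply (iso_map E e) Q = P"
        using iso_map_preimage[OF char ell e(1) on e(2,3)] Pt by blast
      then show ?thesis
        using elliptic_iso_curve(1)[OF char ell e(1)] is_isogeny_iso_map[OF char ell e(1)]
          isog_degree_iso_map[OF char] by blast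
    qed
  qed blast
qed

end
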